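(* Let $k$ be a positive integer and let $D$ be a digraph of order $n$ with no isolated vertex such that $\Delta^-(D)\ge\Delta^+(D)\ge1$. If $k>(\Delta^-(D))^2$, then $\gamma_{trk}(D)=n$.
   Context: All digraphs are finite, with no loops or multiple arcs (pairs of opposite arcs are allowed). $N^-(v)$ denotes the set of in-neighbors of $v$; $\Delta^+(D)$ and $\Delta^-(D)$ are the maximum out-degree and maximum in-degree of $D$. A vertex is isolated if it has no in-neighbor and no out-neighbor. For a positive integer $k$, a $k$-rainbow dominating function ($k$RDF) on $D$ is a function $f:V(D)\to\mathcal P(\{1,\dots,k\})$ such that every $v$ with $f(v)=\emptyset$ satisfies $\bigcup_{u\in N^-(v)}f(u)=\{1,\dots,k\}$; its weight is $\omega(f)=\sum_v|f(v)|$. If $D$ has no isolated vertex, a total $k$RDF (T$k$RDF) is a $k$RDF $f$ such that the subdigraph induced by $\{v:f(v)\ne\emptyset\}$ has no isolated vertex; $\gamma_{trk}(D)$ is the minimum weight of a T$k$RDF. *)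

theory Defs
  imports Main
begin

definition digraph :: "'a set \<Rightarrow> ('a \<Rightarrow> 'a \<Rightarrow> bool) \<Rightarrow> bool" where
  "digraph V A \<longleftrightarrow> finite V \<and> (\<forall>u v. A u v \<longrightarrow> u \<in> V \<and> v \<in> V) \<and> (\<forall>v. \<not> A v v)"

definition in_nbrs :: "'a set \<Rightarrow> ('a \<Rightarrow> 'a \<Rightarrow> bool) \<Rightarrow> 'a \<Rightarrow> 'a set" where
  "in_nbrs V A v = {u \<in> V. A u v}"

definition out_nbrs :: "'a set \<Rightarrow> ('a \<Rightarrow> 'a \<Rightarrow> bool) \<Rightarrow> 'a \<Rightarrow> 'a set" where
  "out_nbrs V A v = {w \<in> V. A v w}"

definition max_outdeg :: "'a set \<Rightarrow> ('a \<Rightarrow> 'a \<Rightarrow> bool) \<Rightarrow> nat" where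
  "max_outdeg V A = Max ((\<lambda>v. card (out_nbrs V A v)) ` V)"

definition max_indeg :: "'a set \<Rightarrow> ('a \<Rightarrow> 'a \<Rightarrow> bool) \<Rightarrow> nat" where
  "max_indeg V A = Max ((\<lambda>v. card (in_nbrs V A v)) ` V)"

definition isolated :: "'a set \<Rightarrow> ('a \<Rightarrow> 'a \<Rightarrow> bool) \<Rightarrow> 'a \<Rightarrow> bool" where
  "isolated V A v \<longleftrightarrow> in_nbrs V A v = {} \<and> out_nbrs V A v = {}"

definition kRDF :: "nat \<Rightarrow> 'a set \<Rightarrow> ('a \<Rightarrow> 'a \<Rightarrow> bool) \<Rightarrow> ('a \<Rightarrow> nat set) \<Rightarrow> bool" where
  "kRDF k V A f \<longleftrightarrow>
     (\<forall>v. v \<notin> V \<longrightarrow> f v = {}) \<and>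
     (\<forall>v\<in>V. f v \<subseteq> {1..k}) \<and>
     (\<forall>v\<in>V. f v = {} \<longrightarrow> (\<Union>u\<in>in_nbrs V A v. f u) = {1..k})"

definition weight :: "'a set \<Rightarrow> ('a \<Rightarrow> nat set) \<Rightarrow> nat" where
  "weight V f = (\<Sum>v\<in>V. card (f v))"

text \<open>Total kRDF: the subdigraph induced by {v. f v \<noteq> {}} has no isolated vertex.\<close>
definition TkRDF :: "nat \<Rightarrow> 'a set \<Rightarrow> ('a \<Rightarrow> 'a \<Rightarrow> bool) \<Rightarrow> ('a \<Rightarrow> nat set) \<Rightarrow> bool" where
  "TkRDF k V A f \<longleftrightarrow> kRDF k V A f \<and>
     (\<forall>v\<in>V. f v \<noteq> {} \<longrightarrow> (\<exists>u\<in>V. f u \<noteq> {} \<and> (A u v \<or> A v u)))"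

definition gamma_trk :: "nat \<Rightarrow> 'a set \<Rightarrow> ('a \<Rightarrow> 'a \<Rightarrow> bool) \<Rightarrow> nat" where
  "gamma_trk k V A = Min {weight V f | f. TkRDF k V A f}"

end

theory Submission
  imports Defs
begin

text \<open>Let \<open>V\<^sub>0\<close> be the vertices with empty label and \<open>V\<^sub>1\<close> the others, and call
  \<open>|f u| - 1\<close> the excess of \<open>u \<in> V\<^sub>1\<close>. A vertex of \<open>V\<^sub>0\<close> sees all \<open>k\<close> colours
  on at most \<open>\<Delta>\<^sup>-\<close> in-neighbours in \<open>V\<^sub>1\<close>, so those carry excess at least
  \<open>k - \<Delta>\<^sup>- \<ge> \<Delta>\<^sup>+\<close>. Each vertex of \<open>V\<^sub>1\<close> is counted for at most \<open>\<Delta>\<^sup>+\<close> vertices of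
  \<open>V\<^sub>0\<close>, so double counting gives \<open>|V\<^sub>0| \<le>\<close> total excess, i.e. the weight is at
  least \<open>|V\<^sub>1| + |V\<^sub>0| = n\<close> whenever \<open>k \<ge> \<Delta>\<^sup>- + \<Delta>\<^sup>+\<close>. Since \<open>k > (\<Delta>\<^sup>-)\<^sup>2 \<ge> 2\<Delta>\<^sup>- - 1\<close>,
  this applies; the constant labelling \<open>{1}\<close> is a total kRDF of weight \<open>n\<close>.\<close>

lemma sum_card_eq_card_plus_excess:
  assumes "finite S" and "\<And>u. u \<in> S \<Longrightarrow> finite (F u) \<and> F u \<noteq> {}"
  shows "(\<Sum>u\<in>S. card (F u)) = card S + (\<Sum>u\<in>S. card (F u) - 1)"
proof -
  have "(\<Sum>u\<in>S. card (F u)) = (\<Sum>u\<in>S. 1 + (card (F u) - 1))"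
    using assms(2) by (intro sum.cong) (auto simp: Suc_le_eq card_gt_0_iff)
  thus ?thesis by (simp only: sum.distrib card_eq_sum)
qed

lemma sum_sum_filter_le_mult:
  fixes g :: "'b \<Rightarrow> nat"
  assumes "finite X" and "finite Y" and "\<And>u. u \<in> Y \<Longrightarrow> card {v \<in> X. R u v} \<le> d"
  shows "(\<Sum>v\<in>X. \<Sum>u\<in>{u \<in> Y. R u v}. g u) \<le> d * (\<Sum>u\<in>Y. g u)"
proof -
  have "(\<Sum>v\<in>X. \<Sum>u\<in>{u \<in> Y. R u v}. g u) = (\<Sum>v\<in>X. \<Sum>u\<in>Y. if R u v then g u else 0)"
    using assms(2) by (simp add: sum.inter_filter)
  also have "\<dots> = (\<Sum>u\<in>Y. \<Sum>v\<in>X. if R u v then g u else 0)"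
    by (rule sum.swap)
  also have "\<dots> = (\<Sum>u\<in>Y. card {v \<in> X. R u v} * g u)"
    using assms(1) by (simp add: sum.inter_filter[symmetric])
  also have "\<dots> \<le> (\<Sum>u\<in>Y. d * g u)"
    using assms(3) by (intro sum_mono mult_right_mono) auto
  finally show ?thesis by (simp add: sum_distrib_left)
qed

lemma kRDF_le_sum_card_in_nbrs:
  assumes "digraph V A" and "kRDF k V A f" and "v \<in> V" and "f v = {}"
  shows "k \<le> (\<Sum>u\<in>{u \<in> V. f u \<noteq> {} \<and> A u v}. card (f u))"
proof -
  let ?N = "{u \<in> V. f u \<noteq> {} \<and> A u v}"
  have "finite ?N" using assms(1) by (simp add: digraph_def)
  have "{1..k} = (\<Union>u\<in>in_nbrs V A v. f u)"
    using assms(2-4) by (simp add: kRDF_def)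
  also have "\<dots> = (\<Union>u\<in>?N. f u)" by (auto simp: in_nbrs_def)
  finally have "k = card (\<Union>u\<in>?N. f u)" by (metis card_atLeastAtMost diff_Suc_1)
  also have "\<dots> \<le> (\<Sum>u\<in>?N. card (f u))" using \<open>finite ?N\<close> by (rule card_UN_le)
  finally show ?thesis .
qed

lemma kRDF_weight_ge_card:
  assumes dg: "digraph V A" and f: "kRDF k V A f"
    and din: "\<And>v. v \<in> V \<Longrightarrow> card (in_nbrs V A v) \<le> d\<^sub>i\<^sub>n"
    and dout: "\<And>v. v \<in> V \<Longrightarrow> card (out_nbrs V A v) \<le> d\<^sub>o\<^sub>u\<^sub>t"
    and dout_pos: "d\<^sub>o\<^sub>u\<^sub>t \<ge> 1" and k: "d\<^sub>i\<^sub>n + d\<^sub>o\<^sub>u\<^sub>t \<le> k"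
  shows "card V \<le> weight V f"
proof -
  have fin: "finite V" using dg by (simp add: digraph_def)
  have fin_f: "finite (f v)" if "v \<in> V" for v
    using f that finite_subset[of "f v" "{1..k}"] by (simp add: kRDF_def)
  define V1 where "V1 = {v \<in> V. f v \<noteq> {}}"
  define V0 where "V0 = {v \<in> V. f v = {}}"
  define excess where "excess u = card (f u) - 1" for u
  have V_split: "V = V1 \<union> V0" "V1 \<inter> V0 = {}" and fin_parts: "finite V1" "finite V0"
    using fin by (auto simp: V1_def V0_def)
  have weight_V1: "weight V f = card V1 + (\<Sum>u\<in>V1. excess u)"
  proof -
    have "weight V f = (\<Sum>u\<in>V1. card (f u)) + (\<Sum>u\<in>V0. card (f u))"
      unfolding weight_def V_split(1) using fin_parts V_split(2) by (rule sum.union_disjoint)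
    also have "\<dots> = (\<Sum>u\<in>V1. card (f u))" by (simp add: V0_def)
    finally show ?thesis
      using sum_card_eq_card_plus_excess[OF fin_parts(1), of f] fin_f
      by (simp add: V1_def excess_def)
  qed
  have excess_near_V0: "d\<^sub>o\<^sub>u\<^sub>t \<le> (\<Sum>u\<in>{u \<in> V1. A u v}. excess u)" if v: "v \<in> V0" for v
  proof -
    let ?N = "{u \<in> V1. A u v}"
    have "finite ?N" using fin_parts by simp
    have "?N \<subseteq> in_nbrs V A v" by (auto simp: V1_def in_nbrs_def)
    hence "card ?N \<le> d\<^sub>i\<^sub>n"
      using fin din[of v] v card_mono[of "in_nbrs V A v" ?N]
      by (force simp: V0_def in_nbrs_def)
    have "?N = {u \<in> V. f u \<noteq> {} \<and> A u v}" by (auto simp: V1_def)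
    hence "k \<le> (\<Sum>u\<in>?N. card (f u))"
      using kRDF_le_sum_card_in_nbrs[OF dg f, of v] v by (simp add: V0_def)
    also have "\<dots> = card ?N + (\<Sum>u\<in>?N. excess u)"
      using sum_card_eq_card_plus_excess[OF \<open>finite ?N\<close>, of f] fin_f
      by (simp add: V1_def excess_def)
    finally show ?thesis using \<open>card ?N \<le> d\<^sub>i\<^sub>n\<close> k by linarith
  qed
  have "d\<^sub>o\<^sub>u\<^sub>t * card V0 \<le> (\<Sum>v\<in>V0. \<Sum>u\<in>{u \<in> V1. A u v}. excess u)"
    using sum_mono[of V0 "\<lambda>_. d\<^sub>o\<^sub>u\<^sub>t", OF excess_near_V0] by (simp add: mult.commute)
  also have "\<dots> \<le> d\<^sub>o\<^sub>u\<^sub>t * (\<Sum>u\<in>V1. excess u)"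
  proof (rule sum_sum_filter_le_mult[OF fin_parts(2,1)])
    fix u assume "u \<in> V1"
    have "{v \<in> V0. A u v} \<subseteq> out_nbrs V A u" by (auto simp: V0_def out_nbrs_def)
    hence "card {v \<in> V0. A u v} \<le> card (out_nbrs V A u)"
      by (rule card_mono[rotated]) (simp add: fin out_nbrs_def)
    thus "card {v \<in> V0. A u v} \<le> d\<^sub>o\<^sub>u\<^sub>t" using dout \<open>u \<in> V1\<close> by (force simp: V1_def)
  qed
  finally have "card V0 \<le> (\<Sum>u\<in>V1. excess u)" using dout_pos by simp
  moreover have "card V = card V1 + card V0"
    unfolding V_split(1) using fin_parts V_split(2) by (rule card_Un_disjoint)
  ultimately show ?thesis using weight_V1 by linarith
qed

lemma TkRDF_const_singleton:
  assumes "k \<ge> 1" and "\<forall>v\<in>V. \<not> isolated V A v"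
  shows "TkRDF k V A (\<lambda>v. if v \<in> V then {1} else {})"
proof -
  have "\<exists>u\<in>V. A u v \<or> A v u" if "v \<in> V" for v
    using assms(2) that unfolding isolated_def in_nbrs_def out_nbrs_def by blast
  thus ?thesis using assms(1) by (auto simp: TkRDF_def kRDF_def)
qed

lemma finite_TkRDF_weights:
  assumes "digraph V A"
  shows "finite {weight V f | f. TkRDF k V A f}"
proof (rule finite_subset)
  have "weight V f \<le> card V * k" if "TkRDF k V A f" for f
  proof -
    have "card (f v) \<le> k" if "v \<in> V" for v
      using \<open>TkRDF k V A f\<close> that card_mono[of "{1..k}" "f v"]
      by (simp add: TkRDF_def kRDF_def)
    thus ?thesis unfolding weight_def using sum_bounded_above[of V "\<lambda>v. card (f v)" k] by simp
  qed
  thus "{weight V f | f. TkRDF k V A f} \<subseteq> {..card V * k}" by auto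
qed simp

lemma gamma_trk_eqI:
  assumes "digraph V A" and "TkRDF k V A f" and "weight V f = m"
    and "\<And>g. TkRDF k V A g \<Longrightarrow> m \<le> weight V g"
  shows "gamma_trk k V A = m"
  unfolding gamma_trk_def
  using assms finite_TkRDF_weights[OF assms(1)] by (intro Min_eqI) auto

lemma card_in_nbrs_le_max_indeg:
  "digraph V A \<Longrightarrow> v \<in> V \<Longrightarrow> card (in_nbrs V A v) \<le> max_indeg V A"
  unfolding max_indeg_def digraph_def by (rule Max_ge) auto

lemma card_out_nbrs_le_max_outdeg:
  "digraph V A \<Longrightarrow> v \<in> V \<Longrightarrow> card (out_nbrs V A v) \<le> max_outdeg V A"
  unfolding max_outdeg_def digraph_def by (rule Max_ge) auto

lemma double_le_square_Suc: "2 * d \<le> d\<^sup>2 + (1::nat)"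
proof -
  have "int (2 * d) \<le> int (d\<^sup>2 + 1)"
    using zero_le_power2[of "int d - 1"] by (simp add: power2_eq_square algebra_simps)
  thus ?thesis by linarith
qed

theorem corollary3p3:
  fixes V :: "'a set" and A :: "'a \<Rightarrow> 'a \<Rightarrow> bool" and k n :: nat
  assumes "digraph V A"
    and "card V = n"
    and "k \<ge> 1"
    and "\<forall>v\<in>V. \<not> isolated V A v"
    and "max_indeg V A \<ge> max_outdeg V A"
    and "max_outdeg V A \<ge> 1"
    and "k > (max_indeg V A)^2"
  shows "gamma_trk k V A = n"
proof (rule gamma_trk_eqI[OF assms(1) TkRDF_const_singleton[OF assms(3,4)]])
  show "weight V (\<lambda>v. if v \<in> V then {1} else {}) = n"
    using assms(2) by (simp add: weight_def)
  have degrees_le_k: "max_indeg V A + max_outdeg V A \<le> k"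
    using assms(5,7) double_le_square_Suc[of "max_indeg V A"] by linarith
  show "n \<le> weight V g" if "TkRDF k V A g" for g
  proof -
    have "kRDF k V A g" using that by (simp add: TkRDF_def)
    from kRDF_weight_ge_card[OF assms(1) this card_in_nbrs_le_max_indeg[OF assms(1)]
        card_out_nbrs_le_max_outdeg[OF assms(1)] assms(6) degrees_le_k]
    show ?thesis using assms(2) by simp
  qed
qed

end
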